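(* Let $\hat\mu_n=F(\hat m_n^1,\dots,\hat m_n^{l_1},m_n^{l_1+1},\dots,m_n^{l_1+l_2})$ be a moment-type estimator as in the context (conditions (i)–(iii)), and suppose in addition that $F$ is uniformly locally linearly approximable: there exist $N$, $C>0$, $\epsilon>0$ and, for each $n$, a matrix $dF_{m_n}\in\mathbb{R}^{k\times l_1}$ such that for all $n\ge N$ and all $\tilde m_{r}=(\tilde m^1,\dots,\tilde m^{l_1})'$ with $\|\tilde m_r-m_{n,r}\|_2^2<\epsilon$, $$\|F(\tilde m^1,\dots,\tilde m^{l_1},m_n^{l_1+1},\dots,m_n^{l_1+l_2})-F(m_n)-dF_{m_n}(\tilde m_r-m_{n,r})\|_2\le C\|\tilde m_r-m_{n,r}\|_2^2,$$ where $m_n=(m_n^1,\dots,m_n^{l_1+l_2})$ and $m_{n,r}=(m_n^1,\dots,m_n^{l_1})'$. Define the linearization $\hat\mu_n^L=F(m_n)+dF_{m_n}(\hat m_{n,r}-m_{n,r})$ with $\hat m_{n,r}=(\hat m_n^1,\dots,\hat m_n^{l_1})'$. If $|||\mathbf{D}|||_2/n\to0$, then $$\hat\mu_n-\hat\mu_n^L=o_p\Big(\sqrt{|||\mathbf{D}|||_2/n}\Big)=o_p(1),$$ and $$\mathrm{Var}(\hat\mu_n^L)=\frac1{n^2}z'\mathbf{D}z,\qquad z=\Big(\sum_{s=1}^{l_1}dF^s_{m_n}1_{kn}'\,\mathrm{diag}(\phi^s)\Big)'\in\mathbb{R}^{kn\times k},$$ where $dF^s_{m_n}\in\mathbb{R}^{k}$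 is the $s$-th column of $dF_{m_n}$. Moreover, if $\frac1n\|z\|_2^2=O(1)$ (Frobenius norm), then every entry of $\mathrm{Var}(\hat\mu_n^L)$ is $O(|||\mathbf{D}|||_2/n)$, and hence $O(1/n)$ if also $|||\mathbf{D}|||_2=O(1)$.
   Context: Setup: there are $k$ treatment arms and $n$ units; $k$ is fixed while $n\to\infty$ along a sequence of finite populations, each with its own randomized design. All probabilities, expectations, variances, $O_p$ and $o_p$ refer only to the randomness of the treatment assignment. $\mathbf{R}_{ai}\in\{0,1\}$ indicates that unit $i$ is assigned to arm $a$ (exactly one arm per unit); $\mathbf{R}$ is the $kn\times kn$ diagonal matrix with diagonal $(\mathbf{R}_{11},\dots,\mathbf{R}_{1n},\mathbf{R}_{21},\dots,\mathbf{R}_{kn})$; $\pi=\mathrm{E}[\mathbf{R}]$ with diagonal entries in $(0,1)$; $1_{kn}$ is the all-ones vector; $\mathbf{D}=\mathrm{Var}(\pi^{-1}\mathbf{R}1_{kn})$; $|||\cdot|||_2$ is the spectral norm; $\mathrm{diag}(v)$ is the diagonal matrix with diagonal $v$. Moment-type estimator: fixed integers $l_1\ge1,l_2\ge0$; for each $n$, nonrandom $\phi^1,\dots,\phi^{l_1+l_2}\in\mathbb{R}^{kn}$ and a map $F=F_n:\mathbb{R}^{l_1+l_2}\to\mathbb{R}^k$ with (i) $\hat\mu_n=F(\hat m_n^1,\dots,\hat m_n^{l_1},m_n^{l_1+1},\dots,m_n^{l_1+l_2})$, $\hat m_n^s=\frac1n1_{kn}'\pi^{-1}\mathbf{R}\phi^s$,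 $m_n^s=\frac1n1_{kn}'\phi^s$; (ii) there exist $N,C,\epsilon>0$ such that for $n\ge N$ and $\sum_{s\le l_1}(\tilde m^s-m_n^s)^2<\epsilon$, $\|F(\tilde m^1,\dots,\tilde m^{l_1},m_n^{l_1+1},\dots)-F(m_n)\|_2\le C\sqrt{\sum_{s\le l_1}(\tilde m^s-m_n^s)^2}$; (iii) $\frac1n\|\phi^s\|_2^2\le C'$ for all $s,n$. *)

theory Defs
  imports "HOL-Probability.Probability" "HOL-Library.Landau_Symbols"
begin

text \<open>A randomized design on n units with k arms is a pmf over assignment
  functions w, where w i is the arm of unit i (i < n).  Vectors in R^{kn} are
  functions on pairs (a,i) with a < k, i < n.\<close>

definition Rind :: "(nat \<Rightarrow> nat) \<Rightarrow> nat \<Rightarrow> nat \<Rightarrow> real" where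
  "Rind w a i = (if w i = a then 1 else 0)"

definition piD :: "(nat \<Rightarrow> nat) pmf \<Rightarrow> nat \<Rightarrow> nat \<Rightarrow> real" where
  "piD P a i = measure_pmf.expectation P (\<lambda>w. Rind w a i)"

definition covar :: "'a pmf \<Rightarrow> ('a \<Rightarrow> real) \<Rightarrow> ('a \<Rightarrow> real) \<Rightarrow> real" where
  "covar P X Y = measure_pmf.expectation P
     (\<lambda>w. (X w - measure_pmf.expectation P X) * (Y w - measure_pmf.expectation P Y))"

definition idx :: "nat \<Rightarrow> nat \<Rightarrow> (nat \<times> nat) set" where
  "idx k n = {..<k} \<times> {..<n}"

definition mhat :: "(nat \<Rightarrow> nat) pmf \<Rightarrow> nat \<Rightarrow> nat \<Rightarrow> (nat \<Rightarrow> nat \<Rightarrow> real)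
    \<Rightarrow> (nat \<Rightarrow> nat) \<Rightarrow> real" where
  "mhat P k n phi w = (1 / real n) * (\<Sum>(a,i)\<in>idx k n. Rind w a i * phi a i / piD P a i)"

definition mpop :: "nat \<Rightarrow> nat \<Rightarrow> (nat \<Rightarrow> nat \<Rightarrow> real) \<Rightarrow> real" where
  "mpop k n phi = (1 / real n) * (\<Sum>(a,i)\<in>idx k n. phi a i)"

definition Dmat :: "(nat \<Rightarrow> nat) pmf \<Rightarrow> nat \<times> nat \<Rightarrow> nat \<times> nat \<Rightarrow> real" where
  "Dmat P r c = covar P (\<lambda>w. Rind w (fst r) (snd r) / piD P (fst r) (snd r))
                         (\<lambda>w. Rind w (fst c) (snd c) / piD P (fst c) (snd c))"

definition vnorm :: "'i set \<Rightarrow> ('i \<Rightarrow> real) \<Rightarrow> real" where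
  "vnorm I v = sqrt (\<Sum>r\<in>I. (v r)\<^sup>2)"

definition spec_norm :: "'i set \<Rightarrow> ('i \<Rightarrow> 'i \<Rightarrow> real) \<Rightarrow> real" where
  "spec_norm I M = Sup {vnorm I (\<lambda>r. \<Sum>c\<in>I. M r c * x c) | x. vnorm I x \<le> 1}"

text \<open>X_n = o_p(a_n) for nonnegative random quantities X_n
  (e.g. norms of random vectors) under the designs P n\<close>
definition little_op :: "(nat \<Rightarrow> 'a pmf) \<Rightarrow> (nat \<Rightarrow> 'a \<Rightarrow> real) \<Rightarrow> (nat \<Rightarrow> real) \<Rightarrow> bool" where
  "little_op P X a \<longleftrightarrow> (\<forall>\<epsilon>>0.
     (\<lambda>n. measure_pmf.prob (P n) {w. X n w > \<epsilon> * a n}) \<longlonglongrightarrow> 0)"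

text \<open>Argument vector (mt^1..mt^{l1}, mv^{l1+1}..mv^{l1+l2}) of F (0-indexed)\<close>
definition argv :: "nat \<Rightarrow> nat \<Rightarrow> (nat \<Rightarrow> real) \<Rightarrow> (nat \<Rightarrow> real) \<Rightarrow> nat \<Rightarrow> real" where
  "argv l1 l2 mt mv = (\<lambda>s. if s < l1 then mt s else if s < l1 + l2 then mv s else 0)"

end

theory Submission
  imports Defs
begin

text \<open>The estimated moments and the linearization are affine in the inverse-probability
  weights R_ai / pi_ai, whose covariance matrix is D. Bilinearity of covariance therefore gives
  the variance formula, and bounding the resulting quadratic forms by the spectral norm gives
  E (mhat^s - m^s)^2 <= |||D|||/n * |phi^s|^2/n. On the event where the squared moment errors
  sum to less than epsilon, the remainder of the linearization is at most C times that sum, so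
  two applications of Markov's inequality to it (at level epsilon and at level
  delta sqrt(|||D|||/n)) give the o_p rate.\<close>

lemma bounded_range_mult:
  fixes f g :: "'a \<Rightarrow> real"
  assumes "bounded (range f)" "bounded (range g)"
  shows "bounded (range (\<lambda>x. f x * g x))"
proof -
  obtain B1 B2 where "\<And>x. \<bar>f x\<bar> \<le> B1" "\<And>x. \<bar>g x\<bar> \<le> B2"
    using assms by (auto simp: bounded_real)
  then have "\<bar>f x * g x\<bar> \<le> B1 * B2" for x
    unfolding abs_mult by (intro mult_mono) (auto intro: order_trans[OF abs_ge_zero])
  then show ?thesis by (auto simp: bounded_real)
qed

lemma bounded_range_sum:
  fixes f :: "'i \<Rightarrow> 'a \<Rightarrow> real"
  shows "(\<And>i. i \<in> I \<Longrightarrow> bounded (range (f i))) \<Longrightarrow> bounded (range (\<lambda>x. \<Sum>i\<in>I. f i x))"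
proof (induction I rule: infinite_finite_induct)
  case (insert i I)
  then show ?case by (simp add: bounded_plus_comp)
qed auto

lemma integrable_measure_pmf_bounded_range:
  fixes f :: "'a \<Rightarrow> real"
  assumes "bounded (range f)"
  shows "integrable (measure_pmf Q) f"
proof -
  obtain B where "\<And>x. \<bar>f x\<bar> \<le> B" using assms by (auto simp: bounded_real)
  then show ?thesis by (intro measure_pmf.integrable_const_bound[where B=B]) auto
qed

lemma covar_add_const:
  assumes "integrable (measure_pmf Q) X" "integrable (measure_pmf Q) Y"
  shows "covar Q (\<lambda>w. c + X w) (\<lambda>w. d + Y w) = covar Q X Y"
  unfolding covar_def using assms by simp

lemma covar_sum:
  fixes X :: "'i \<Rightarrow> 'a \<Rightarrow> real"
  assumes "finite I" and X_bounded: "\<And>r. r \<in> I \<Longrightarrow> bounded (range (X r))"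
  shows "covar Q (\<lambda>w. \<Sum>r\<in>I. \<alpha> r * X r w) (\<lambda>w. \<Sum>r\<in>I. \<beta> r * X r w)
       = (\<Sum>r\<in>I. \<Sum>q\<in>I. \<alpha> r * \<beta> q * covar Q (X r) (X q))"
proof -
  let ?E = "measure_pmf.expectation Q"
  define Y where "Y = (\<lambda>r w. X r w - ?E (X r))"
  have int_X: "integrable (measure_pmf Q) (X r)" if "r \<in> I" for r
    using X_bounded[OF that] by (rule integrable_measure_pmf_bounded_range)
  have bounded_Y: "bounded (range (Y r))" if "r \<in> I" for r
    unfolding Y_def using X_bounded[OF that] by (intro bounded_minus_comp) auto
  have centered: "(\<Sum>r\<in>I. \<gamma> r * X r w) - ?E (\<lambda>w. \<Sum>r\<in>I. \<gamma> r * X r w) = (\<Sum>r\<in>I. \<gamma> r * Y r w)"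
    for \<gamma> w
    using int_X by (simp add: Y_def sum_subtractf right_diff_distrib)
  have "covar Q (\<lambda>w. \<Sum>r\<in>I. \<alpha> r * X r w) (\<lambda>w. \<Sum>r\<in>I. \<beta> r * X r w)
      = ?E (\<lambda>w. \<Sum>r\<in>I. \<Sum>q\<in>I. \<alpha> r * \<beta> q * (Y r w * Y q w))"
    unfolding covar_def centered sum_product by (simp add: mult_ac)
  also have "\<dots> = (\<Sum>r\<in>I. \<Sum>q\<in>I. \<alpha> r * \<beta> q * ?E (\<lambda>w. Y r w * Y q w))"
    using bounded_Y
    by (simp add: integrable_measure_pmf_bounded_range bounded_range_mult bounded_range_sum)
  finally show ?thesis unfolding covar_def Y_def .
qed

lemma vnorm_eq_L2_set: "vnorm I v = L2_set v I"
  unfolding vnorm_def L2_set_def by simp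

lemma abs_sum_mult_le_L2_set: "\<bar>\<Sum>c\<in>I. f c * g c\<bar> \<le> L2_set f I * L2_set g I"
  using sum_abs[of "\<lambda>c. f c * g c" I] L2_set_mult_ineq[of f g I] by (simp add: abs_mult)

lemma bdd_above_spec_norm:
  assumes "finite I"
  shows "bdd_above {vnorm I (\<lambda>r. \<Sum>c\<in>I. M r c * x c) | x. vnorm I x \<le> 1}"
proof -
  have "vnorm I (\<lambda>r. \<Sum>c\<in>I. M r c * x c) \<le> L2_set (\<lambda>r. L2_set (M r) I) I" if "vnorm I x \<le> 1" for x
  proof -
    have "\<bar>\<Sum>c\<in>I. M r c * x c\<bar> \<le> L2_set (M r) I" for r
      using abs_sum_mult_le_L2_set[of "M r" x I]
        mult_left_le[OF that[unfolded vnorm_eq_L2_set] L2_set_nonneg[of "M r" I]]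
      by linarith
    then have "L2_set (\<lambda>r. \<bar>\<Sum>c\<in>I. M r c * x c\<bar>) I \<le> L2_set (\<lambda>r. L2_set (M r) I) I"
      by (intro L2_set_mono) auto
    then show ?thesis by (simp add: vnorm_def L2_set_def power2_abs)
  qed
  then show ?thesis unfolding bdd_above_def by blast
qed

lemma spec_norm_upper:
  assumes "finite I" "vnorm I x \<le> 1"
  shows "vnorm I (\<lambda>r. \<Sum>c\<in>I. M r c * x c) \<le> spec_norm I M"
  unfolding spec_norm_def using assms by (intro cSup_upper bdd_above_spec_norm) auto

lemma spec_norm_nonneg: "finite I \<Longrightarrow> 0 \<le> spec_norm I M"
  using spec_norm_upper[of I "\<lambda>_. 0" M] by (simp add: vnorm_def)

lemma vnorm_mult_le_spec_norm:
  assumes "finite I"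
  shows "vnorm I (\<lambda>r. \<Sum>c\<in>I. M r c * y c) \<le> spec_norm I M * vnorm I y"
proof (cases "vnorm I y = 0")
  case True
  then have "\<forall>c\<in>I. y c = 0" using assms by (simp add: vnorm_eq_L2_set L2_set_eq_0_iff)
  then show ?thesis by (simp add: vnorm_def)
next
  case False
  define t where "t = vnorm I y"
  have "t > 0" using False L2_set_nonneg[of y I] unfolding t_def vnorm_eq_L2_set by linarith
  have scale: "vnorm I (\<lambda>r. u r / t) = vnorm I u / t" for u
    using \<open>t > 0\<close> L2_set_right_distrib[of "1/t" u I] by (simp add: vnorm_eq_L2_set)
  have "vnorm I (\<lambda>c. y c / t) = 1"
    using scale[of y] \<open>t > 0\<close> unfolding t_def by simp
  then have "vnorm I (\<lambda>r. \<Sum>c\<in>I. M r c * (y c / t)) \<le> spec_norm I M"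
    using assms by (intro spec_norm_upper) auto
  moreover have "(\<lambda>r. \<Sum>c\<in>I. M r c * (y c / t)) = (\<lambda>r. (\<Sum>c\<in>I. M r c * y c) / t)"
    by (simp add: sum_divide_distrib)
  ultimately have "vnorm I (\<lambda>r. \<Sum>c\<in>I. M r c * y c) / t \<le> spec_norm I M"
    by (simp only: scale)
  then show ?thesis
    using \<open>t > 0\<close> unfolding t_def by (simp add: divide_le_eq)
qed

lemma abs_bilinear_form_le_spec_norm:
  assumes "finite I"
  shows "\<bar>\<Sum>r\<in>I. \<Sum>c\<in>I. x r * M r c * y c\<bar> \<le> spec_norm I M * vnorm I x * vnorm I y"
proof -
  have "\<bar>\<Sum>r\<in>I. \<Sum>c\<in>I. x r * M r c * y c\<bar> = \<bar>\<Sum>r\<in>I. x r * (\<Sum>c\<in>I. M r c * y c)\<bar>"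
    by (simp add: sum_distrib_left mult.assoc)
  also have "\<dots> \<le> vnorm I x * vnorm I (\<lambda>r. \<Sum>c\<in>I. M r c * y c)"
    unfolding vnorm_eq_L2_set by (rule abs_sum_mult_le_L2_set)
  also have "\<dots> \<le> vnorm I x * (spec_norm I M * vnorm I y)"
    by (intro mult_left_mono vnorm_mult_le_spec_norm assms) (simp add: vnorm_def sum_nonneg)
  finally show ?thesis by (simp add: mult_ac)
qed

lemma abs_bilinear_form_columns_le:
  assumes "finite I" "finite A" "a \<in> A" "b \<in> A"
  shows "\<bar>\<Sum>r\<in>I. \<Sum>c\<in>I. z r a * M r c * z c b\<bar> \<le> spec_norm I M * (\<Sum>r\<in>I. \<Sum>e\<in>A. (z r e)\<^sup>2)"
proof -
  have column: "vnorm I (\<lambda>r. z r e) \<le> sqrt (\<Sum>r\<in>I. \<Sum>e\<in>A. (z r e)\<^sup>2)" if "e \<in> A" for e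
    unfolding vnorm_def using assms(2) that
    by (intro real_sqrt_le_mono sum_mono member_le_sum[where f="\<lambda>e. (z _ e)\<^sup>2"]) auto
  have "\<bar>\<Sum>r\<in>I. \<Sum>c\<in>I. z r a * M r c * z c b\<bar>
      \<le> spec_norm I M * vnorm I (\<lambda>r. z r a) * vnorm I (\<lambda>r. z r b)"
    by (rule abs_bilinear_form_le_spec_norm[OF assms(1)])
  also have "\<dots> \<le> spec_norm I M * sqrt (\<Sum>r\<in>I. \<Sum>e\<in>A. (z r e)\<^sup>2) * sqrt (\<Sum>r\<in>I. \<Sum>e\<in>A. (z r e)\<^sup>2)"
    using column assms spec_norm_nonneg[OF assms(1), of M]
    by (intro mult_mono) (auto simp: vnorm_def intro!: sum_nonneg mult_nonneg_nonneg)
  also have "\<dots> = spec_norm I M * (\<Sum>r\<in>I. \<Sum>e\<in>A. (z r e)\<^sup>2)"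
    by (simp add: mult.assoc sum_nonneg)
  finally show ?thesis .
qed

definition ipw :: "(nat \<Rightarrow> nat) pmf \<Rightarrow> nat \<times> nat \<Rightarrow> (nat \<Rightarrow> nat) \<Rightarrow> real" where
  "ipw Q r w = Rind w (fst r) (snd r) / piD Q (fst r) (snd r)"

lemma bounded_range_ipw: "bounded (range (ipw Q r))"
proof -
  have "\<bar>ipw Q r w\<bar> \<le> 1 / \<bar>piD Q (fst r) (snd r)\<bar>" for w
    unfolding ipw_def Rind_def by simp
  then show ?thesis by (auto simp: bounded_real)
qed

lemma expectation_ipw: "0 < piD Q (fst r) (snd r) \<Longrightarrow> measure_pmf.expectation Q (ipw Q r) = 1"
  unfolding ipw_def by (simp add: piD_def[symmetric])

lemma finite_idx [simp]: "finite (idx k n)"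
  unfolding idx_def by simp

lemma mhat_eq_sum_ipw:
  "mhat Q k n phi w = (\<Sum>r\<in>idx k n. phi (fst r) (snd r) / real n * ipw Q r w)"
  unfolding mhat_def ipw_def split_def sum_distrib_left by (simp add: divide_inverse mult_ac)

lemma bounded_range_mhat: "bounded (range (mhat Q k n phi))"
  unfolding mhat_eq_sum_ipw
  by (intro bounded_range_sum bounded_range_mult bounded_range_ipw) auto

lemma expectation_mhat:
  assumes "\<And>a i. a < k \<Longrightarrow> i < n \<Longrightarrow> 0 < piD Q a i"
  shows "measure_pmf.expectation Q (mhat Q k n phi) = mpop k n phi"
proof -
  have "measure_pmf.expectation Q (mhat Q k n phi)
      = (\<Sum>r\<in>idx k n. phi (fst r) (snd r) / real n * measure_pmf.expectation Q (ipw Q r))"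
    unfolding mhat_eq_sum_ipw
    by (simp add: integrable_measure_pmf_bounded_range bounded_range_ipw)
  also have "\<dots> = (\<Sum>r\<in>idx k n. phi (fst r) (snd r) / real n)"
    using assms by (intro sum.cong refl) (auto simp: expectation_ipw idx_def)
  finally show ?thesis
    unfolding mpop_def split_def by (simp add: sum_divide_distrib)
qed

lemma covar_sum_mhat:
  fixes p :: "'s \<Rightarrow> nat \<Rightarrow> nat \<Rightarrow> real"
  assumes "finite S"
  defines "z \<equiv> \<lambda>d r. \<Sum>s\<in>S. d s * p s (fst r) (snd r)"
  shows "covar Q (\<lambda>w. \<Sum>s\<in>S. d s * mhat Q k n (p s) w) (\<lambda>w. \<Sum>s\<in>S. e s * mhat Q k n (p s) w)
       = (\<Sum>r\<in>idx k n. \<Sum>c\<in>idx k n. z d r * Dmat Q r c * z e c) / (real n)\<^sup>2"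
proof -
  have as_ipw: "(\<Sum>s\<in>S. d s * mhat Q k n (p s) w) = (\<Sum>r\<in>idx k n. z d r / real n * ipw Q r w)"
    for d w
    unfolding mhat_eq_sum_ipw z_def sum_distrib_left sum_divide_distrib sum_distrib_right
    by (subst sum.swap) (simp add: mult_ac)
  show ?thesis
    unfolding as_ipw covar_sum[OF finite_idx bounded_range_ipw]
    by (simp add: Dmat_def ipw_def[symmetric] sum_divide_distrib power2_eq_square mult_ac)
qed

lemma covar_linearization:
  fixes p :: "'s \<Rightarrow> nat \<Rightarrow> nat \<Rightarrow> real"
  assumes "finite S"
  defines "z \<equiv> \<lambda>d r. \<Sum>s\<in>S. d s * p s (fst r) (snd r)"
  shows "covar Q (\<lambda>w. c + (\<Sum>s\<in>S. d s * (mhat Q k n (p s) w - mpop k n (p s))))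
                 (\<lambda>w. c' + (\<Sum>s\<in>S. e s * (mhat Q k n (p s) w - mpop k n (p s))))
       = 1 / (real n)\<^sup>2 * (\<Sum>r\<in>idx k n. \<Sum>q\<in>idx k n. z d r * Dmat Q r q * z e q)"
proof -
  have affine: "\<gamma> + (\<Sum>s\<in>S. d s * (mhat Q k n (p s) w - mpop k n (p s)))
      = (\<gamma> - (\<Sum>s\<in>S. d s * mpop k n (p s))) + (\<Sum>s\<in>S. d s * mhat Q k n (p s) w)" for \<gamma> d w
    by (simp add: right_diff_distrib sum_subtractf)
  have "integrable (measure_pmf Q) (\<lambda>w. \<Sum>s\<in>S. d s * mhat Q k n (p s) w)" for d
    by (intro integrable_measure_pmf_bounded_range bounded_range_sum bounded_range_mult
        bounded_range_mhat) auto
  then show ?thesis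
    unfolding affine by (simp add: covar_add_const covar_sum_mhat[OF assms(1)] z_def)
qed

lemma mse_mhat_le:
  assumes "\<And>a i. a < k \<Longrightarrow> i < n \<Longrightarrow> 0 < piD Q a i"
    and "(1 / real n) * (\<Sum>(a,i)\<in>idx k n. (phi a i)\<^sup>2) \<le> B"
  shows "measure_pmf.expectation Q (\<lambda>w. (mhat Q k n phi w - mpop k n phi)\<^sup>2)
       \<le> B * (spec_norm (idx k n) (Dmat Q) / real n)"
proof -
  define v where "v = (\<lambda>r. phi (fst r) (snd r))"
  have "measure_pmf.expectation Q (\<lambda>w. (mhat Q k n phi w - mpop k n phi)\<^sup>2)
      = covar Q (mhat Q k n phi) (mhat Q k n phi)"
    by (simp add: covar_def expectation_mhat[OF assms(1)] power2_eq_square)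
  also have "\<dots> = (\<Sum>r\<in>idx k n. \<Sum>c\<in>idx k n. v r * Dmat Q r c * v c) / (real n)\<^sup>2"
    using covar_sum_mhat[of "{()}" Q "\<lambda>_. 1" k n "\<lambda>_. phi" "\<lambda>_. 1"] by (simp add: v_def)
  also have "\<dots> \<le> spec_norm (idx k n) (Dmat Q) * (vnorm (idx k n) v * vnorm (idx k n) v) / (real n)\<^sup>2"
    using abs_bilinear_form_le_spec_norm[OF finite_idx, of v "Dmat Q" v k n]
    by (intro divide_right_mono) (auto simp: mult.assoc)
  also have "vnorm (idx k n) v * vnorm (idx k n) v = (\<Sum>(a,i)\<in>idx k n. (phi a i)\<^sup>2)"
    unfolding vnorm_def v_def split_def by (simp add: sum_nonneg)
  also have "spec_norm (idx k n) (Dmat Q) * (\<Sum>(a,i)\<in>idx k n. (phi a i)\<^sup>2) / (real n)\<^sup>2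
      = (1 / real n) * (\<Sum>(a,i)\<in>idx k n. (phi a i)\<^sup>2) * (spec_norm (idx k n) (Dmat Q) / real n)"
    by (simp add: power2_eq_square)
  also have "\<dots> \<le> B * (spec_norm (idx k n) (Dmat Q) / real n)"
    using assms(2) by (intro mult_right_mono) (simp_all add: spec_norm_nonneg)
  finally show ?thesis .
qed

lemma prob_gt_sqrt_le:
  fixes S Z :: "'a \<Rightarrow> real"
  assumes "integrable (measure_pmf Q) S" and S_nonneg: "\<And>w. 0 \<le> S w"
    and E_S: "measure_pmf.expectation Q S \<le> K * a"
    and "0 \<le> K" "0 \<le> a" "0 < \<epsilon>" "0 < C" "0 < \<delta>"
    and Z_le: "\<And>w. S w < \<epsilon> \<Longrightarrow> Z w \<le> C * S w"
  shows "measure_pmf.prob Q {w. Z w > \<delta> * sqrt a} \<le> K * a / \<epsilon> + K * C * sqrt a / \<delta>"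
proof -
  have markov: "measure_pmf.prob Q {w. t \<le> S w} \<le> K * a / t" if "0 < t" for t
    using integral_Markov_inequality_measure[OF assms(1), of UNIV t] that S_nonneg E_S
    by (simp add: divide_right_mono order_trans)
  have "{w. Z w > \<delta> * sqrt a} \<subseteq> {w. \<epsilon> \<le> S w} \<union> {w. C * S w > \<delta> * sqrt a}"
    using Z_le by (force simp: not_le[symmetric])
  then have "measure_pmf.prob Q {w. Z w > \<delta> * sqrt a}
      \<le> measure_pmf.prob Q ({w. \<epsilon> \<le> S w} \<union> {w. C * S w > \<delta> * sqrt a})"
    by (intro measure_pmf.finite_measure_mono) auto
  also have "\<dots> \<le> measure_pmf.prob Q {w. \<epsilon> \<le> S w} + measure_pmf.prob Q {w. C * S w > \<delta> * sqrt a}"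
    by (rule measure_Un_le) auto
  also have "measure_pmf.prob Q {w. \<epsilon> \<le> S w} \<le> K * a / \<epsilon>"
    using markov \<open>0 < \<epsilon>\<close> .
  also have "measure_pmf.prob Q {w. C * S w > \<delta> * sqrt a} \<le> K * C * sqrt a / \<delta>"
  proof (cases "a = 0")
    case True
    then have "AE w in measure_pmf Q. S w = 0"
      using E_S S_nonneg integral_nonneg_eq_0_iff_AE[OF assms(1)] by (simp add: antisym)
    then have "measure_pmf.prob Q {w. C * S w > 0} = 0"
      by (auto simp: AE_measure_pmf_iff measure_pmf_zero_iff)
    then show ?thesis using True by simp
  next
    case False
    define t where "t = \<delta> * sqrt a / C"
    have "0 < t" using False assms unfolding t_def by simp
    have "measure_pmf.prob Q {w. C * S w > \<delta> * sqrt a} \<le> measure_pmf.prob Q {w. t \<le> S w}"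
      unfolding t_def using \<open>0 < C\<close>
      by (intro measure_pmf.finite_measure_mono) (auto simp: field_simps)
    also have "\<dots> \<le> K * a / t" using markov \<open>0 < t\<close> .
    also have "K * a / t = K * C * sqrt a / \<delta>"
      using False assms unfolding t_def by (simp add: field_simps real_sqrt_mult[symmetric])
    finally show ?thesis .
  qed
  finally show ?thesis by simp
qed

lemma little_op_mono_rate:
  assumes "little_op P X a" "eventually (\<lambda>n. a n \<le> b n) sequentially"
  shows "little_op P X b"
  unfolding little_op_def
proof (intro allI impI)
  fix \<delta> :: real assume "0 < \<delta>"
  show "(\<lambda>n. measure_pmf.prob (P n) {w. X n w > \<delta> * b n}) \<longlonglongrightarrow> 0"
  proof (rule tendsto_sandwich[OF _ _ tendsto_const])
    show "(\<lambda>n. measure_pmf.prob (P n) {w. X n w > \<delta> * a n}) \<longlonglongrightarrow> 0"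
      using assms(1) \<open>0 < \<delta>\<close> unfolding little_op_def by blast
    show "eventually (\<lambda>n. measure_pmf.prob (P n) {w. X n w > \<delta> * b n}
        \<le> measure_pmf.prob (P n) {w. X n w > \<delta> * a n}) sequentially"
      using assms(2)
    proof eventually_elim
      case (elim n)
      then have "\<delta> * a n \<le> \<delta> * b n" using \<open>0 < \<delta>\<close> by simp
      then show ?case by (intro measure_pmf.finite_measure_mono) auto
    qed
  qed simp
qed

lemma little_op_one_of_sqrt_rate:
  assumes "little_op P X (\<lambda>n. sqrt (A n))" "A \<longlonglongrightarrow> 0"
  shows "little_op P X (\<lambda>n. 1)"
proof (rule little_op_mono_rate[OF assms(1)])
  show "eventually (\<lambda>n. sqrt (A n) \<le> 1) sequentially"
    using order_tendstoD(2)[OF tendsto_real_sqrt[OF assms(2)], of 1] by (auto elim: eventually_mono)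
qed

lemma little_op_sqrt_of_quadratic_remainder:
  fixes S Z :: "nat \<Rightarrow> 'a \<Rightarrow> real"
  assumes integrable: "\<And>n. integrable (measure_pmf (P n)) (S n)"
    and S_nonneg: "\<And>n w. 0 \<le> S n w"
    and E_S: "\<And>n. measure_pmf.expectation (P n) (S n) \<le> K * A n"
    and "0 \<le> K" "\<And>n. 0 \<le> A n" "A \<longlonglongrightarrow> 0" "0 < \<epsilon>" "0 < C"
    and remainder: "\<And>n w. n \<ge> N \<Longrightarrow> S n w < \<epsilon> \<Longrightarrow> Z n w \<le> C * S n w"
  shows "little_op P Z (\<lambda>n. sqrt (A n))"
  unfolding little_op_def
proof (intro allI impI)
  fix \<delta> :: real assume "0 < \<delta>"
  have "(\<lambda>n. sqrt (A n)) \<longlonglongrightarrow> 0"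
    using tendsto_real_sqrt[OF \<open>A \<longlonglongrightarrow> 0\<close>] by simp
  then have bound_to_0: "(\<lambda>n. K * A n / \<epsilon> + K * C * sqrt (A n) / \<delta>) \<longlonglongrightarrow> 0"
    by (intro tendsto_add_zero tendsto_divide_zero tendsto_mult_right_zero \<open>A \<longlonglongrightarrow> 0\<close>)
  have bound: "eventually (\<lambda>n. measure_pmf.prob (P n) {w. Z n w > \<delta> * sqrt (A n)}
      \<le> K * A n / \<epsilon> + K * C * sqrt (A n) / \<delta>) sequentially"
    using eventually_ge_at_top[of N]
  proof eventually_elim
    case (elim n)
    show ?case
      by (rule prob_gt_sqrt_le[OF integrable S_nonneg E_S assms(4,5,7,8) \<open>0 < \<delta>\<close>
            remainder[OF elim]])
  qed
  show "(\<lambda>n. measure_pmf.prob (P n) {w. Z n w > \<delta> * sqrt (A n)}) \<longlonglongrightarrow> 0"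
    by (rule tendsto_sandwich[OF _ bound tendsto_const bound_to_0]) simp
qed

lemma little_op_sqrt_plugin_remainder:
  fixes R :: "nat \<Rightarrow> (nat \<Rightarrow> real) \<Rightarrow> real" and mh :: "nat \<Rightarrow> nat \<Rightarrow> 'a \<Rightarrow> real"
  assumes quadratic: "\<And>n mt. n \<ge> N \<Longrightarrow> (\<Sum>s<l. (mt s - m n s)\<^sup>2) < \<epsilon> \<Longrightarrow>
      R n mt \<le> C * (\<Sum>s<l. (mt s - m n s)\<^sup>2)"
    and mh_bounded: "\<And>n s. s < l \<Longrightarrow> bounded (range (mh n s))"
    and mse: "\<And>n s. s < l \<Longrightarrow> measure_pmf.expectation (P n) (\<lambda>w. (mh n s w - m n s)\<^sup>2) \<le> C' * A n"
    and "0 \<le> C'" "\<And>n. 0 \<le> A n" "A \<longlonglongrightarrow> 0" "0 < \<epsilon>" "0 < C"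
  shows "little_op P (\<lambda>n w. R n (\<lambda>s. mh n s w)) (\<lambda>n. sqrt (A n))"
proof (rule little_op_sqrt_of_quadratic_remainder)
  let ?S = "\<lambda>n w. \<Sum>s<l. (mh n s w - m n s)\<^sup>2"
  have "bounded (range (\<lambda>w. (mh n s w - m n s)\<^sup>2))" if "s < l" for n s
    unfolding power2_eq_square using mh_bounded[OF that]
    by (intro bounded_range_mult bounded_minus_comp) auto
  then have integrable: "integrable (measure_pmf (P n)) (\<lambda>w. (mh n s w - m n s)\<^sup>2)" if "s < l" for n s
    using that by (intro integrable_measure_pmf_bounded_range)
  then show "integrable (measure_pmf (P n)) (?S n)" for n by auto
  show "measure_pmf.expectation (P n) (?S n) \<le> (real l * C') * A n" for n
    using sum_mono[of "{..<l}" "\<lambda>s. measure_pmf.expectation (P n) (\<lambda>w. (mh n s w - m n s)\<^sup>2)"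
        "\<lambda>_. C' * A n"] mse
    by (simp add: integrable mult_ac)
  show "n \<ge> N \<Longrightarrow> ?S n w < \<epsilon> \<Longrightarrow> R n (\<lambda>s. mh n s w) \<le> C * ?S n w" for n w
    by (rule quadratic)
qed (use assms in \<open>auto intro: sum_nonneg\<close>)

lemma bigo_of_abs_le_mult:
  fixes f g h :: "nat \<Rightarrow> real"
  assumes "\<And>n. \<bar>f n\<bar> \<le> g n * h n" "h \<in> O(\<lambda>_. 1)"
  shows "f \<in> O(g)"
proof -
  have "\<bar>f n\<bar> \<le> \<bar>g n * h n\<bar>" for n
    using assms(1)[of n] abs_ge_self[of "g n * h n"] by linarith
  then have "f \<in> O(\<lambda>n. g n * h n)"
    by (intro bigoI[where c=1] always_eventually) simp
  also have "(\<lambda>n. g n * h n) \<in> O(\<lambda>n. g n * 1)"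
    using assms(2) by (rule landau_o.big.mult_left)
  finally show ?thesis by simp
qed

theorem mainTheorem2:
  fixes k l1 l2 :: nat
    and P :: "nat \<Rightarrow> (nat \<Rightarrow> nat) pmf"
    and phi :: "nat \<Rightarrow> nat \<Rightarrow> nat \<Rightarrow> nat \<Rightarrow> real"
    and F :: "nat \<Rightarrow> (nat \<Rightarrow> real) \<Rightarrow> nat \<Rightarrow> real"
    and dF :: "nat \<Rightarrow> nat \<Rightarrow> nat \<Rightarrow> real"
  defines "mv \<equiv> \<lambda>n s. mpop k n (phi n s)"
  defines "mhv \<equiv> \<lambda>n s w. mhat (P n) k n (phi n s) w"
  defines "muhat \<equiv> \<lambda>n w. F n (argv l1 l2 (\<lambda>s. mhv n s w) (mv n))"
  defines "muL \<equiv> \<lambda>n w a. F n (argv l1 l2 (mv n) (mv n)) a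
                          + (\<Sum>s<l1. dF n a s * (mhv n s w - mv n s))"
  defines "D \<equiv> \<lambda>n. Dmat (P n)"
  defines "z \<equiv> \<lambda>n (r::nat \<times> nat) a. \<Sum>s<l1. dF n a s * phi n s (fst r) (snd r)"
  assumes l1_pos: "l1 \<ge> 1"
    and design: "\<And>n w i. w \<in> set_pmf (P n) \<Longrightarrow> i < n \<Longrightarrow> w i < k"
    and pi_bounds: "\<And>n a i. a < k \<Longrightarrow> i < n \<Longrightarrow> 0 < piD (P n) a i \<and> piD (P n) a i < 1"
    and F_lip: "\<exists>N C \<epsilon>. C > 0 \<and> \<epsilon> > 0 \<and> (\<forall>n\<ge>N. \<forall>mt.
        (\<Sum>s<l1. (mt s - mv n s)\<^sup>2) < \<epsilon> \<longrightarrow>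
        vnorm {..<k} (\<lambda>a. F n (argv l1 l2 mt (mv n)) a - F n (argv l1 l2 (mv n) (mv n)) a)
          \<le> C * sqrt (\<Sum>s<l1. (mt s - mv n s)\<^sup>2))"
    and phi_bound: "\<exists>C'. \<forall>n s. s < l1 + l2 \<longrightarrow>
        (1 / real n) * (\<Sum>(a,i)\<in>idx k n. (phi n s a i)\<^sup>2) \<le> C'"
    and F_lin: "\<exists>N C \<epsilon>. C > 0 \<and> \<epsilon> > 0 \<and> (\<forall>n\<ge>N. \<forall>mt.
        (\<Sum>s<l1. (mt s - mv n s)\<^sup>2) < \<epsilon> \<longrightarrow>
        vnorm {..<k} (\<lambda>a. F n (argv l1 l2 mt (mv n)) a - F n (argv l1 l2 (mv n) (mv n)) a
                           - (\<Sum>s<l1. dF n a s * (mt s - mv n s)))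
          \<le> C * (\<Sum>s<l1. (mt s - mv n s)\<^sup>2))"
  shows
    "((\<lambda>n. spec_norm (idx k n) (D n) / real n) \<longlonglongrightarrow> 0 \<longrightarrow>
        little_op P (\<lambda>n w. vnorm {..<k} (\<lambda>a. muhat n w a - muL n w a))
                     (\<lambda>n. sqrt (spec_norm (idx k n) (D n) / real n))
      \<and> little_op P (\<lambda>n w. vnorm {..<k} (\<lambda>a. muhat n w a - muL n w a)) (\<lambda>n. 1))
   \<and> (\<forall>n a b. a < k \<longrightarrow> b < k \<longrightarrow>
        covar (P n) (\<lambda>w. muL n w a) (\<lambda>w. muL n w b)
        = (1 / (real n)\<^sup>2) * (\<Sum>r\<in>idx k n. \<Sum>c\<in>idx k n. z n r a * D n r c * z n c b))
   \<and> ((\<lambda>n. (1 / real n) * (\<Sum>r\<in>idx k n. \<Sum>a<k. (z n r a)\<^sup>2)) \<in> O(\<lambda>n. 1) \<longrightarrow>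
        (\<forall>a<k. \<forall>b<k. (\<lambda>n. covar (P n) (\<lambda>w. muL n w a) (\<lambda>w. muL n w b))
             \<in> O(\<lambda>n. spec_norm (idx k n) (D n) / real n))
      \<and> ((\<lambda>n. spec_norm (idx k n) (D n)) \<in> O(\<lambda>n. 1) \<longrightarrow>
        (\<forall>a<k. \<forall>b<k. (\<lambda>n. covar (P n) (\<lambda>w. muL n w a) (\<lambda>w. muL n w b))
             \<in> O(\<lambda>n. 1 / real n))))"
proof -
  let ?A = "\<lambda>n. spec_norm (idx k n) (D n) / real n"
  have A_nonneg: "0 \<le> ?A n" for n by (simp add: spec_norm_nonneg)
  have pos: "\<And>n a i. a < k \<Longrightarrow> i < n \<Longrightarrow> 0 < piD (P n) a i"
    using pi_bounds by blast
  have covar_muL: "covar (P n) (\<lambda>w. muL n w a) (\<lambda>w. muL n w b)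
      = (1 / (real n)\<^sup>2) * (\<Sum>r\<in>idx k n. \<Sum>c\<in>idx k n. z n r a * D n r c * z n c b)" for n a b
    unfolding muL_def mhv_def mv_def D_def z_def by (rule covar_linearization) simp
  have remainder: "little_op P (\<lambda>n w. vnorm {..<k} (\<lambda>a. muhat n w a - muL n w a)) (\<lambda>n. sqrt (?A n))
      \<and> little_op P (\<lambda>n w. vnorm {..<k} (\<lambda>a. muhat n w a - muL n w a)) (\<lambda>n. 1)"
    if "?A \<longlonglongrightarrow> 0"
  proof -
    obtain N C \<epsilon> where "0 < C" "0 < \<epsilon>" and quadratic: "\<And>n mt. n \<ge> N \<Longrightarrow>
        (\<Sum>s<l1. (mt s - mv n s)\<^sup>2) < \<epsilon> \<Longrightarrow>
        vnorm {..<k} (\<lambda>a. F n (argv l1 l2 mt (mv n)) a - F n (argv l1 l2 (mv n) (mv n)) a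
                           - (\<Sum>s<l1. dF n a s * (mt s - mv n s)))
          \<le> C * (\<Sum>s<l1. (mt s - mv n s)\<^sup>2)"
      using F_lin by blast
    obtain C' where "0 \<le> C'"
      and C': "\<And>n s. s < l1 \<Longrightarrow> (1 / real n) * (\<Sum>(a,i)\<in>idx k n. (phi n s a i)\<^sup>2) \<le> C'"
      using phi_bound by (meson max.cobounded1 max.cobounded2 order_trans trans_less_add1)
    have mse: "measure_pmf.expectation (P n) (\<lambda>w. (mhv n s w - mv n s)\<^sup>2) \<le> C' * ?A n"
      if "s < l1" for n s
      unfolding mhv_def mv_def D_def by (rule mse_mhat_le[OF pos C'[OF that]])
    have "little_op P (\<lambda>n w. vnorm {..<k} (\<lambda>a. F n (argv l1 l2 (\<lambda>s. mhv n s w) (mv n)) a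
        - F n (argv l1 l2 (mv n) (mv n)) a - (\<Sum>s<l1. dF n a s * (mhv n s w - mv n s)))) (\<lambda>n. sqrt (?A n))"
      by (rule little_op_sqrt_plugin_remainder[OF quadratic _ mse \<open>0 \<le> C'\<close> A_nonneg that \<open>0 < \<epsilon>\<close> \<open>0 < C\<close>])
        (auto simp: mhv_def bounded_range_mhat)
    then have "little_op P (\<lambda>n w. vnorm {..<k} (\<lambda>a. muhat n w a - muL n w a)) (\<lambda>n. sqrt (?A n))"
      unfolding muhat_def muL_def by (simp add: diff_diff_eq)
    then show ?thesis
      using little_op_one_of_sqrt_rate[OF _ that] by blast
  qed
  have covar_bigo: "(\<lambda>n. covar (P n) (\<lambda>w. muL n w a) (\<lambda>w. muL n w b)) \<in> O(?A)"
    if "a < k" "b < k" "(\<lambda>n. (1 / real n) * (\<Sum>r\<in>idx k n. \<Sum>a<k. (z n r a)\<^sup>2)) \<in> O(\<lambda>n. 1)" for a b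
  proof (rule bigo_of_abs_le_mult[OF _ that(3)])
    show "\<bar>covar (P n) (\<lambda>w. muL n w a) (\<lambda>w. muL n w b)\<bar>
        \<le> ?A n * ((1 / real n) * (\<Sum>r\<in>idx k n. \<Sum>a<k. (z n r a)\<^sup>2))" for n
      using abs_bilinear_form_columns_le[of "idx k n" "{..<k}" a b "z n" "D n"] that
      unfolding covar_muL by (simp add: abs_mult power2_eq_square divide_right_mono)
  qed
  have rate: "?A \<in> O(\<lambda>n. 1 / real n)" if "(\<lambda>n. spec_norm (idx k n) (D n)) \<in> O(\<lambda>n. 1)"
    using landau_o.big.mult_right[OF that, where h="\<lambda>n. 1 / real n"] by simp
  show ?thesis
    using covar_muL remainder covar_bigo rate
    by (blast intro: landau_o.big_trans)
qed

end
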